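(* Let $\underline{d}=(d_0,\dots,d_n)\in\mathbb{N}^{n+1}$ and let $M$ be the quiver module (for the equioriented type A quiver $0\to1\to\cdots\to n$ over $\mathbb{C}$) associated with the following lace diagram: in column $x$ place the dots $(x,y)$ for $0\le y<d_x$ (columns aligned at the bottom), and join every pair of dots $(x,y),(x+1,y)$ that are both present by a segment. Then $\mathrm{Ext}(M,M)=0$.
   Context: The quiver module associated with a lace diagram has at vertex $x$ the vector space with basis the dots of column $x$, and the map from vertex $x-1$ to vertex $x$ sends a dot to the dot it is joined to by a segment in column $x$, or to $0$ if there is no such segment. $\mathrm{Ext}=\mathrm{Ext}^1$ in the category of quiver modules. *)

theory Defs
  imports "Jordan_Normal_Form.Matrix" Complex_Main
begin

text \<open>Representations (quiver modules) of the equioriented type A quiver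
  0 -> 1 -> ... -> n over the complex numbers, given in coordinates:
  a pair (V, A) where V x is the dimension of the space at vertex x (the space
  is complex^(V x)) and A x is the matrix of the arrow x -> x+1.\<close>

type_synonym rep = "(nat \<Rightarrow> nat) \<times> (nat \<Rightarrow> complex mat)"

definition is_rep :: "nat \<Rightarrow> rep \<Rightarrow> bool" where
  "is_rep n M \<longleftrightarrow> (\<forall>x<n. snd M x \<in> carrier_mat (fst M (Suc x)) (fst M x))"

definition is_hom :: "nat \<Rightarrow> rep \<Rightarrow> rep \<Rightarrow> (nat \<Rightarrow> complex mat) \<Rightarrow> bool" where
  "is_hom n M N f \<longleftrightarrow>
     (\<forall>x\<le>n. f x \<in> carrier_mat (fst N x) (fst M x)) \<and>
     (\<forall>x<n. f (Suc x) * snd M x = snd N x * f x)"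

definition short_exact ::
  "nat \<Rightarrow> rep \<Rightarrow> rep \<Rightarrow> rep \<Rightarrow> (nat \<Rightarrow> complex mat) \<Rightarrow> (nat \<Rightarrow> complex mat) \<Rightarrow> bool" where
  "short_exact n N E M i p \<longleftrightarrow>
     is_hom n N E i \<and> is_hom n E M p \<and>
     (\<forall>x\<le>n.
        (\<forall>u\<in>carrier_vec (fst N x). i x *\<^sub>v u = 0\<^sub>v (fst E x) \<longrightarrow> u = 0\<^sub>v (fst N x)) \<and>
        (\<forall>w\<in>carrier_vec (fst M x). \<exists>v\<in>carrier_vec (fst E x). p x *\<^sub>v v = w) \<and>
        (\<forall>v\<in>carrier_vec (fst E x).
            p x *\<^sub>v v = 0\<^sub>v (fst M x) \<longleftrightarrow> (\<exists>u\<in>carrier_vec (fst N x). v = i x *\<^sub>v u)))"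

text \<open>Ext^1(M, N) = 0 (Yoneda): every extension 0 -> N -> E -> M -> 0 splits.\<close>
definition Ext_zero :: "nat \<Rightarrow> rep \<Rightarrow> rep \<Rightarrow> bool" where
  "Ext_zero n M N \<longleftrightarrow>
     (\<forall>E i p. is_rep n E \<and> short_exact n N E M i p \<longrightarrow>
        (\<exists>s. is_hom n M E s \<and> (\<forall>x\<le>n. p x * s x = 1\<^sub>m (fst M x))))"

text \<open>The quiver module of the bottom-aligned lace diagram with column sizes d:
  column x has dots (x,y), y < d x, basis vector y of complex^(d x); the arrow
  x -> x+1 sends dot (x,y) to (x+1,y) if that dot exists, else to 0.\<close>
definition lace_module :: "(nat \<Rightarrow> nat) \<Rightarrow> rep" where
  "lace_module d = (d, (\<lambda>x. mat (d (Suc x)) (d x) (\<lambda>(a, b). if a = b then 1 else 0)))"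

end

(*
  The lace module is the direct sum of the interval modules given by the maximal
  segments of its rows. A section of an extension p: E -> M is therefore obtained by
  lifting the first dot (a, y) of every segment to E and transporting the lift along
  the segment, provided the transported lift vanishes one step after the segment ends,
  say at column a + k. The obstruction lies in ker p = i(M_(a+k)), and it is removed
  by correcting the lift by an element of i(M_a): since the columns are bottom-aligned,
  d (a + k) <= y < d (a + j) for j < k, so every dot of column a + k lies on a row
  running back to column a, i.e. the arrow path M_a -> M_(a+k) is surjective.
*)

theory Submission
  imports Defs
begin

lemma mult_unit_vec_eq_col:
  assumes "(A :: 'a::semiring_1 mat) \<in> carrier_mat nr nc" "j < nc"
  shows "A *\<^sub>v unit_vec nc j = col A j"
  using assms by (auto intro!: eq_vecI simp: row_def col_def)

lemma mult_mat_vec_zero: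
  "(A :: 'a::semiring_0 mat) \<in> carrier_mat nr nc \<Longrightarrow> A *\<^sub>v 0\<^sub>v nc = 0\<^sub>v nr"
  by auto

lemma mult_mat_of_cols_eq_one_mat:
  assumes A: "(A :: 'a::semiring_1 mat) \<in> carrier_mat m k" and "length vs = m"
    and "set vs \<subseteq> carrier_vec k" and "\<And>j. j < m \<Longrightarrow> A *\<^sub>v vs ! j = unit_vec m j"
  shows "A * mat_of_cols k vs = 1\<^sub>m m"
proof (rule mat_col_eqI)
  fix j assume "j < dim_col (1\<^sub>m m :: 'a mat)"
  then have j: "j < length vs" using assms(2) by simp
  then have "vs ! j \<in> carrier_vec k" using assms(3) nth_mem by blast
  then show "col (A * mat_of_cols k vs) j = col (1\<^sub>m m) j"
    using col_mult2[OF A mat_of_cols_carrier(1)] j assms(2,4) by simp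
qed (use assms in auto)

lemma is_rep_arrow_carrier:
  "is_rep n M \<Longrightarrow> x < n \<Longrightarrow> snd M x \<in> carrier_mat (fst M (Suc x)) (fst M x)"
  unfolding is_rep_def by blast

lemma is_hom_carrier:
  "is_hom n M N f \<Longrightarrow> x \<le> n \<Longrightarrow> f x \<in> carrier_mat (fst N x) (fst M x)"
  unfolding is_hom_def by blast

lemma is_hom_commute:
  "is_hom n M N f \<Longrightarrow> x < n \<Longrightarrow> f (Suc x) * snd M x = snd N x * f x"
  unfolding is_hom_def by blast

fun arrow_path :: "(nat \<Rightarrow> 'a::semiring_0 mat) \<Rightarrow> nat \<Rightarrow> nat \<Rightarrow> 'a vec \<Rightarrow> 'a vec" where
  "arrow_path B a 0 v = v"
| "arrow_path B a (Suc k) v = B (a + k) *\<^sub>v arrow_path B a k v"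

lemma arrow_path_carrier:
  assumes "is_rep n M" "a + k \<le> n" "v \<in> carrier_vec (fst M a)"
  shows "arrow_path (snd M) a k v \<in> carrier_vec (fst M (a + k))"
  using assms(2)
proof (induction k)
  case (Suc k)
  then show ?case
    using mult_mat_vec_carrier is_rep_arrow_carrier[OF assms(1), of "a + k"] by fastforce
qed (simp add: assms(3))

lemma arrow_path_diff:
  assumes "is_rep n M" "a + k \<le> n" "v \<in> carrier_vec (fst M a)" "w \<in> carrier_vec (fst M a)"
  shows "arrow_path (snd M) a k (v - w) = arrow_path (snd M) a k v - arrow_path (snd M) a k w"
  using assms(2)
proof (induction k)
  case (Suc k)
  have "snd M (a + k) \<in> carrier_mat (fst M (Suc (a + k))) (fst M (a + k))"
    using is_rep_arrow_carrier[OF assms(1)] Suc.prems by simp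
  moreover have "arrow_path (snd M) a k v \<in> carrier_vec (fst M (a + k))"
    and "arrow_path (snd M) a k w \<in> carrier_vec (fst M (a + k))"
    using arrow_path_carrier[OF assms(1)] assms(3,4) Suc.prems by simp_all
  ultimately show ?case
    using Suc by (simp add: mult_minus_distrib_mat_vec)
qed simp

lemma hom_arrow_path:
  assumes M: "is_rep n M" and N: "is_rep n N" and f: "is_hom n M N f"
    and "a + k \<le> n" and v: "v \<in> carrier_vec (fst M a)"
  shows "f (a + k) *\<^sub>v arrow_path (snd M) a k v = arrow_path (snd N) a k (f a *\<^sub>v v)"
  using assms(4)
proof (induction k)
  case (Suc k)
  then have x: "a + k < n" by simp
  have w: "arrow_path (snd M) a k v \<in> carrier_vec (fst M (a + k))"
    using arrow_path_carrier[OF M _ v] Suc.prems by simp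
  have "f (a + Suc k) *\<^sub>v arrow_path (snd M) a (Suc k) v
      = (f (Suc (a + k)) * snd M (a + k)) *\<^sub>v arrow_path (snd M) a k v"
    using is_hom_carrier[OF f, of "Suc (a + k)"] is_rep_arrow_carrier[OF M x] x w by simp
  also have "\<dots> = snd N (a + k) *\<^sub>v (f (a + k) *\<^sub>v arrow_path (snd M) a k v)"
    using is_hom_commute[OF f x] is_hom_carrier[OF f, of "a + k"] is_rep_arrow_carrier[OF N x] x w
    by simp
  finally show ?case using Suc by simp
qed simp

lemma fst_lace_module[simp]: "fst (lace_module d) = d"
  by (simp add: lace_module_def)

lemma lace_arrow_carrier: "snd (lace_module d) x \<in> carrier_mat (d (Suc x)) (d x)"
  by (simp add: lace_module_def)

lemma lace_module_is_rep: "is_rep n (lace_module d)"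
  unfolding is_rep_def using lace_arrow_carrier by simp

lemma lace_arrow_mult_vec:
  assumes "u \<in> carrier_vec (d x)"
  shows "snd (lace_module d) x *\<^sub>v u = vec (d (Suc x)) (\<lambda>t. if t < d x then u $ t else 0)"
proof (rule eq_vecI)
  fix t assume "t < dim_vec (vec (d (Suc x)) (\<lambda>t. if t < d x then u $ t else 0))"
  then have t: "t < d (Suc x)" by simp
  have "(snd (lace_module d) x *\<^sub>v u) $ t = (\<Sum>j = 0..<d x. (if t = j then 1 else 0) * u $ j)"
    using t assms unfolding lace_module_def by (simp add: scalar_prod_def)
  also have "\<dots> = (\<Sum>j = 0..<d x. if j = t then u $ j else 0)"
    by (rule sum.cong) auto
  also have "\<dots> = (if t < d x then u $ t else 0)"
    by (simp add: sum.delta)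
  finally show "(snd (lace_module d) x *\<^sub>v u) $ t = vec (d (Suc x)) (\<lambda>t. if t < d x then u $ t else 0) $ t"
    using t by simp
qed (simp add: lace_module_def)

lemma lace_arrow_path:
  assumes "u \<in> carrier_vec (d a)"
  shows "arrow_path (snd (lace_module d)) a k u
    = vec (d (a + k)) (\<lambda>t. if \<forall>j\<le>k. t < d (a + j) then u $ t else 0)"
proof (induction k)
  case 0
  show ?case using assms by (auto intro!: eq_vecI)
next
  case (Suc k)
  show ?case by (auto simp: Suc lace_arrow_mult_vec le_Suc_eq intro!: eq_vecI)
qed

lemma lace_arrow_path_unit_vec:
  "arrow_path (snd (lace_module d)) a k (unit_vec (d a) y)
    = (if \<forall>j\<le>k. y < d (a + j) then unit_vec (d (a + k)) y else 0\<^sub>v (d (a + k)))"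
proof (rule eq_vecI)
  fix t assume "t < dim_vec (if \<forall>j\<le>k. y < d (a + j) then unit_vec (d (a + k)) y else 0\<^sub>v (d (a + k)))"
  then have t: "t < d (a + k)" by (simp split: if_splits)
  have "t < d a" if "\<forall>j\<le>k. t < d (a + j)"
    using that by (metis add_0_right le0)
  moreover have "unit_vec (d a) y $ t = (if t = y then 1 else 0)" if "t < d a"
    using that by (simp add: unit_vec_def)
  moreover have "t \<noteq> y" if "\<forall>j\<le>k. t < d (a + j)" "\<not> (\<forall>j\<le>k. y < d (a + j))"
    using that by (metis order_less_le_trans not_less)
  ultimately show "arrow_path (snd (lace_module d)) a k (unit_vec (d a) y) $ t =
    (if \<forall>j\<le>k. y < d (a + j) then unit_vec (d (a + k)) y else 0\<^sub>v (d (a + k))) $ t"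
    using t by (auto simp: lace_arrow_path)
qed (simp add: lace_arrow_path)

lemma lace_arrow_path_surj:
  assumes "\<forall>j\<le>k. d (a + k) \<le> d (a + j)" and w: "w \<in> carrier_vec (d (a + k))"
  shows "\<exists>u\<in>carrier_vec (d a). arrow_path (snd (lace_module d)) a k u = w"
proof
  define u where "u = vec (d a) (\<lambda>t. if t < d (a + k) then w $ t else 0)"
  show "u \<in> carrier_vec (d a)" by (simp add: u_def)
  have "t < d (a + j)" if "t < d (a + k)" "j \<le> k" for t j
    using assms(1) that by (meson order_less_le_trans)
  moreover from this[of _ 0] have "t < d a" if "t < d (a + k)" for t
    using that by simp
  ultimately show "arrow_path (snd (lace_module d)) a k u = w"
    using w by (auto simp: lace_arrow_path u_def intro!: eq_vecI)
qed

lemma short_exact_lift_vanishing_along_path: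
  assumes N: "is_rep n N" and E: "is_rep n E" and M: "is_rep n M"
    and se: "short_exact n N E M i p" and k: "a + k \<le> n"
    and N_surj: "\<And>w. w \<in> carrier_vec (fst N (a + k)) \<Longrightarrow>
      \<exists>u\<in>carrier_vec (fst N a). arrow_path (snd N) a k u = w"
    and v0: "v0 \<in> carrier_vec (fst E a)"
    and vanish: "arrow_path (snd M) a k (p a *\<^sub>v v0) = 0\<^sub>v (fst M (a + k))"
  shows "\<exists>v\<in>carrier_vec (fst E a).
    p a *\<^sub>v v = p a *\<^sub>v v0 \<and> arrow_path (snd E) a k v = 0\<^sub>v (fst E (a + k))"
proof -
  have i: "is_hom n N E i" and p: "is_hom n E M p"
    and ker: "\<And>x v. x \<le> n \<Longrightarrow> v \<in> carrier_vec (fst E x) \<Longrightarrow>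
      p x *\<^sub>v v = 0\<^sub>v (fst M x) \<longleftrightarrow> (\<exists>u\<in>carrier_vec (fst N x). v = i x *\<^sub>v u)"
    using se unfolding short_exact_def by auto
  have a: "a \<le> n" using k by simp
  define w' where "w' = arrow_path (snd E) a k v0"
  have w': "w' \<in> carrier_vec (fst E (a + k))"
    unfolding w'_def using arrow_path_carrier[OF E k v0] .
  have "p (a + k) *\<^sub>v w' = 0\<^sub>v (fst M (a + k))"
    unfolding w'_def using hom_arrow_path[OF E M p k v0] vanish by simp
  then obtain w where w: "w \<in> carrier_vec (fst N (a + k))" "w' = i (a + k) *\<^sub>v w"
    using ker[OF k w'] by blast
  then obtain u where u: "u \<in> carrier_vec (fst N a)" "arrow_path (snd N) a k u = w"
    using N_surj by blast
  have iu: "i a *\<^sub>v u \<in> carrier_vec (fst E a)"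
    using is_hom_carrier[OF i a] u(1) by simp
  have piu: "p a *\<^sub>v (i a *\<^sub>v u) = 0\<^sub>v (fst M a)"
    using ker[OF a iu] u(1) by blast
  show ?thesis
  proof (intro bexI conjI)
    show "v0 - i a *\<^sub>v u \<in> carrier_vec (fst E a)"
      using v0 iu by simp
    show "p a *\<^sub>v (v0 - i a *\<^sub>v u) = p a *\<^sub>v v0"
      using is_hom_carrier[OF p a] v0 iu piu by (simp add: mult_minus_distrib_mat_vec)
    have "arrow_path (snd E) a k (i a *\<^sub>v u) = w'"
      using hom_arrow_path[OF N E i k u(1)] u(2) w(2) by simp
    then show "arrow_path (snd E) a k (v0 - i a *\<^sub>v u) = 0\<^sub>v (fst E (a + k))"
      using arrow_path_diff[OF E k v0 iu] w' unfolding w'_def by simp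
  qed
qed

definition row_exit :: "(nat \<Rightarrow> nat) \<Rightarrow> nat \<Rightarrow> nat \<Rightarrow> nat \<Rightarrow> bool" where
  "row_exit d a y k \<longleftrightarrow> d (a + k) \<le> y \<and> (\<forall>j<k. y < d (a + j))"

lemma row_exit_unique:
  assumes "row_exit d a y k" "row_exit d a y k'"
  shows "k = k'"
proof (rule ccontr)
  assume "k \<noteq> k'"
  then have "k < k' \<or> k' < k" by arith
  then show False
    using assms leD unfolding row_exit_def by blast
qed

text \<open>The vanishing condition is what makes the section commute with the arrow leaving the
  last dot of a row segment.\<close>

definition row_lift ::
  "nat \<Rightarrow> (nat \<Rightarrow> nat) \<Rightarrow> rep \<Rightarrow> (nat \<Rightarrow> complex mat) \<Rightarrow> nat \<Rightarrow> nat \<Rightarrow> complex vec \<Rightarrow> bool" where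
  "row_lift n d E p a y v \<longleftrightarrow> v \<in> carrier_vec (fst E a) \<and> p a *\<^sub>v v = unit_vec (d a) y \<and>
     (\<forall>k. a + k \<le> n \<longrightarrow> row_exit d a y k \<longrightarrow> arrow_path (snd E) a k v = 0\<^sub>v (fst E (a + k)))"

lemma row_lift_exists:
  assumes E: "is_rep n E" and se: "short_exact n (lace_module d) E (lace_module d) i p"
    and a: "a \<le> n"
  shows "\<exists>v. row_lift n d E p a y v"
proof -
  have "\<exists>v\<in>carrier_vec (fst E a). p a *\<^sub>v v = unit_vec (d a) y"
    using se a unfolding short_exact_def by simp
  then obtain v0 where v0: "v0 \<in> carrier_vec (fst E a)" "p a *\<^sub>v v0 = unit_vec (d a) y"
    by blast
  show ?thesis
  proof (cases "\<exists>k. a + k \<le> n \<and> row_exit d a y k")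
    case False
    then have "row_lift n d E p a y v0"
      using v0 unfolding row_lift_def by blast
    then show ?thesis ..
  next
    case True
    then obtain k where k: "a + k \<le> n" "row_exit d a y k" by blast
    have "d (a + k) \<le> d (a + j)" if "j \<le> k" for j
    proof (cases "j = k")
      case False
      with that have "y < d (a + j)"
        using k(2) unfolding row_exit_def by simp
      then show ?thesis
        using k(2) unfolding row_exit_def by linarith
    qed simp
    then have "\<exists>u\<in>carrier_vec (d a). arrow_path (snd (lace_module d)) a k u = w"
      if "w \<in> carrier_vec (d (a + k))" for w
      using lace_arrow_path_surj that by blast
    moreover have "arrow_path (snd (lace_module d)) a k (p a *\<^sub>v v0) = 0\<^sub>v (d (a + k))"
      using k(2) v0(2) unfolding row_exit_def by (auto simp: lace_arrow_path_unit_vec)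
    ultimately obtain v where "v \<in> carrier_vec (fst E a)" "p a *\<^sub>v v = p a *\<^sub>v v0"
      "arrow_path (snd E) a k v = 0\<^sub>v (fst E (a + k))"
      using short_exact_lift_vanishing_along_path[OF lace_module_is_rep E lace_module_is_rep se k(1)
          _ v0(1)]
      by (metis fst_lace_module)
    then have "row_lift n d E p a y v"
      using v0(2) row_exit_unique[OF k(2)] unfolding row_lift_def by metis
    then show ?thesis ..
  qed
qed

text \<open>Column y of the section at vertex x: the image of the dot (x - 1, y) if there is one,
  otherwise the chosen lift V x y.\<close>

fun row_transport ::
  "(nat \<Rightarrow> 'a::semiring_0 mat) \<Rightarrow> (nat \<Rightarrow> nat \<Rightarrow> 'a vec) \<Rightarrow> (nat \<Rightarrow> nat) \<Rightarrow> nat \<Rightarrow> nat \<Rightarrow> 'a vec" where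
  "row_transport B V d 0 y = V 0 y"
| "row_transport B V d (Suc x) y =
    (if y < d x then B x *\<^sub>v row_transport B V d x y else V (Suc x) y)"

lemma row_transport_eq_arrow_path:
  assumes "y < d x"
  shows "\<exists>a\<le>x. (\<forall>j. a \<le> j \<and> j \<le> x \<longrightarrow> y < d j) \<and>
    row_transport B V d x y = arrow_path B a (x - a) (V a y)"
  using assms
proof (induction x)
  case (Suc x)
  show ?case
  proof (cases "y < d x")
    case True
    then obtain a where a: "a \<le> x" "\<forall>j. a \<le> j \<and> j \<le> x \<longrightarrow> y < d j"
      "row_transport B V d x y = arrow_path B a (x - a) (V a y)"
      using Suc.IH by blast
    then have "row_transport B V d (Suc x) y = arrow_path B a (Suc x - a) (V a y)"
      using True by (simp add: Suc_diff_le)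
    moreover have "\<forall>j. a \<le> j \<and> j \<le> Suc x \<longrightarrow> y < d j"
      using a(2) Suc.prems le_Suc_eq by auto
    ultimately show ?thesis
      using a(1) le_SucI by blast
  next
    case False
    then show ?thesis
      using Suc.prems by (intro exI[of _ "Suc x"]) auto
  qed
qed auto

lemma row_transport_section:
  assumes E: "is_rep n E" and p: "is_hom n E (lace_module d) p"
    and V: "\<And>a y. a \<le> n \<Longrightarrow> row_lift n d E p a y (V a y)"
    and x: "x \<le> n" and y: "y < d x"
  shows row_transport_carrier: "row_transport (snd E) V d x y \<in> carrier_vec (fst E x)"
    and row_transport_lifts: "p x *\<^sub>v row_transport (snd E) V d x y = unit_vec (d x) y"
    and row_transport_exit:
      "x < n \<Longrightarrow> d (Suc x) \<le> y \<Longrightarrow> snd E x *\<^sub>v row_transport (snd E) V d x y = 0\<^sub>v (fst E (Suc x))"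
proof -
  obtain a where a: "a \<le> x" "\<forall>j. a \<le> j \<and> j \<le> x \<longrightarrow> y < d j"
    and S: "row_transport (snd E) V d x y = arrow_path (snd E) a (x - a) (V a y)"
    using row_transport_eq_arrow_path[of y d x "snd E" V] y by blast
  have ax: "a + (x - a) = x" using a(1) by simp
  have lift: "row_lift n d E p a y (V a y)" using V a(1) x by simp
  then have Va: "V a y \<in> carrier_vec (fst E a)" unfolding row_lift_def by blast
  show "row_transport (snd E) V d x y \<in> carrier_vec (fst E x)"
    using arrow_path_carrier[OF E _ Va, of "x - a"] S ax x by simp
  have "\<forall>j\<le>x - a. y < d (a + j)"
  proof (intro allI impI)
    fix j assume "j \<le> x - a"
    then have "a \<le> a + j \<and> a + j \<le> x" using a(1) by linarith
    then show "y < d (a + j)" using a(2) by blast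
  qed
  then show "p x *\<^sub>v row_transport (snd E) V d x y = unit_vec (d x) y"
    using hom_arrow_path[OF E lace_module_is_rep p _ Va, of "x - a"] lift S ax x
    by (simp add: row_lift_def lace_arrow_path_unit_vec)
  assume "x < n" "d (Suc x) \<le> y"
  then have "row_exit d a y (Suc (x - a))"
    using a(2) ax unfolding row_exit_def by (auto simp: less_Suc_eq_le)
  then show "snd E x *\<^sub>v row_transport (snd E) V d x y = 0\<^sub>v (fst E (Suc x))"
    using lift \<open>x < n\<close> S ax unfolding row_lift_def by (metis Suc_leI add_Suc_right arrow_path.simps(2))
qed

lemma lace_arrow_col:
  assumes "c < d x"
  shows "col (snd (lace_module d) x) c
    = (if c < d (Suc x) then unit_vec (d (Suc x)) c else 0\<^sub>v (d (Suc x)))"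
proof -
  have "col (snd (lace_module d) x) c = snd (lace_module d) x *\<^sub>v unit_vec (d x) c"
    using mult_unit_vec_eq_col[OF lace_arrow_carrier[of d x] assms] by simp
  also have "\<dots> = vec (d (Suc x)) (\<lambda>t. if t < d x then unit_vec (d x) c $ t else 0)"
    by (rule lace_arrow_mult_vec) simp
  finally show ?thesis
    using assms by (auto intro!: eq_vecI)
qed

lemma is_hom_lace_module_mat_of_cols:
  assumes E: "is_rep n E"
    and S_carrier: "\<And>x c. x \<le> n \<Longrightarrow> c < d x \<Longrightarrow> S x c \<in> carrier_vec (fst E x)"
    and S_arrow: "\<And>x c. x < n \<Longrightarrow> c < d x \<Longrightarrow>
      snd E x *\<^sub>v S x c = (if c < d (Suc x) then S (Suc x) c else 0\<^sub>v (fst E (Suc x)))"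
  shows "is_hom n (lace_module d) E (\<lambda>x. mat_of_cols (fst E x) (map (S x) [0..<d x]))"
    (is "is_hom n _ E ?s")
proof -
  have s: "?s x \<in> carrier_mat (fst E x) (d x)" for x
    using mat_of_cols_carrier(1)[of "fst E x" "map (S x) [0..<d x]"] by simp
  have col_s: "col (?s x) c = S x c" if "x \<le> n" "c < d x" for x c
    using that S_carrier by simp
  have "?s (Suc x) * snd (lace_module d) x = snd E x * ?s x" if x: "x < n" for x
  proof (rule mat_col_eqI)
    fix c assume "c < dim_col (snd E x * ?s x)"
    then have c: "c < d x" by simp
    have "col (?s (Suc x) * snd (lace_module d) x) c = ?s (Suc x) *\<^sub>v col (snd (lace_module d) x) c"
      using col_mult2[OF s[of "Suc x"] lace_arrow_carrier[of d x] c] .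
    also have "\<dots> = snd E x *\<^sub>v S x c"
      using lace_arrow_col[of c d x, OF c] mult_unit_vec_eq_col[OF s[of "Suc x"]]
        mult_mat_vec_zero[OF s[of "Suc x"]] col_s S_arrow[OF x c] x
      by auto
    also have "\<dots> = col (snd E x * ?s x) c"
      using col_mult2[OF is_rep_arrow_carrier[OF E x] s c] col_s[of x c] c x by simp
    finally show "col (?s (Suc x) * snd (lace_module d) x) c = col (snd E x * ?s x) c" .
  qed (use is_rep_arrow_carrier[OF E x] lace_arrow_carrier[of d x] in auto)
  then show ?thesis
    unfolding is_hom_def using s by simp
qed

theorem corollary2p5:
  fixes n :: nat and d :: "nat \<Rightarrow> nat"
  shows "Ext_zero n (lace_module d) (lace_module d)"
  unfolding Ext_zero_def
proof (intro allI impI, elim conjE)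
  fix E i p
  assume E: "is_rep n E" and se: "short_exact n (lace_module d) E (lace_module d) i p"
  then have p: "is_hom n E (lace_module d) p"
    unfolding short_exact_def by blast
  define V where "V a y = (SOME v. row_lift n d E p a y v)" for a y
  have V: "row_lift n d E p a y (V a y)" if "a \<le> n" for a y
    unfolding V_def using someI_ex[OF row_lift_exists[OF E se that]] .
  define s where "s x = mat_of_cols (fst E x) (map (row_transport (snd E) V d x) [0..<d x])" for x
  have "is_hom n (lace_module d) E s"
    unfolding s_def
    by (rule is_hom_lace_module_mat_of_cols[OF E])
      (auto intro: row_transport_carrier[OF E p V] row_transport_exit[OF E p V])
  moreover have "p x * s x = 1\<^sub>m (d x)" if "x \<le> n" for x
    unfolding s_def
    using that is_hom_carrier[OF p that] row_transport_carrier[OF E p V] row_transport_lifts[OF E p V]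
    by (intro mult_mat_of_cols_eq_one_mat) auto
  ultimately show "\<exists>s. is_hom n (lace_module d) E s \<and> (\<forall>x\<le>n. p x * s x = 1\<^sub>m (fst (lace_module d) x))"
    by auto
qed

end
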